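(* Let $G$ be a $q$-cut-dense graph of order $n$. For any $U\subseteq V(G)$ with $|U|\le qn/8$, the graph $G\setminus U$ is $q/2$-cut-dense.
   Context: A graph $G$ is $q$-cut-dense if for every partition $V(G)=A\cup B$ into disjoint sets, $e_G(A,B)\ge q|A||B|$, where $e_G(A,B)$ is the number of edges of $G$ with one endpoint in $A$ and the other in $B$. $G\setminus U$ denotes $G$ with the vertices of $U$ deleted. *)

theory Defs
  imports Main "HOL-Library.Disjoint_Sets" Complex_Main
begin

definition simple_graph :: "'a set \<Rightarrow> 'a set set \<Rightarrow> bool" where
  "simple_graph V E \<longleftrightarrow> finite V \<and> (\<forall>e\<in>E. e \<subseteq> V \<and> card e = 2)"

definition e_between :: "'a set set \<Rightarrow> 'a set \<Rightarrow> 'a set \<Rightarrow> nat" where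
  "e_between E A B = card {e\<in>E. \<exists>a\<in>A. \<exists>b\<in>B. e = {a, b}}"

definition cut_dense :: "real \<Rightarrow> 'a set \<Rightarrow> 'a set set \<Rightarrow> bool" where
  "cut_dense q V E \<longleftrightarrow>
     (\<forall>A B. A \<union> B = V \<and> A \<inter> B = {} \<longrightarrow>
        real (e_between E A B) \<ge> q * real (card A) * real (card B))"

definition del_verts_V :: "'a set \<Rightarrow> 'a set \<Rightarrow> 'a set" where
  "del_verts_V V U = V - U"

definition del_verts_E :: "'a set set \<Rightarrow> 'a set \<Rightarrow> 'a set set" where
  "del_verts_E E U = {e\<in>E. e \<inter> U = {}}"

end

theory Submission
  imports Defs
begin

text \<open>Let \<open>V - U = A \<union> B\<close> with \<open>|A| \<le> |B|\<close>. Cut density of \<open>G\<close> applied to the cut \<open>(A, B \<union> U)\<close>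
  gives \<open>q |A| (|B| + |U|)\<close> edges; deleting \<open>U\<close> loses at most the \<open>|A| |U|\<close> edges between
  \<open>A\<close> and \<open>U\<close>, and all remaining ones join \<open>A\<close> to \<open>B\<close> in \<open>G - U\<close>. Since
  \<open>n = |A| + |B| + |U| \<le> 2|B| + |U|\<close>, the bound \<open>|U| \<le> qn/8\<close> makes the loss
  \<open>(1 - q) |A| |U|\<close> at most \<open>q |A| |B| / 2\<close>.\<close>

lemma cut_denseD:
  assumes "cut_dense q V E" "A \<union> B = V" "A \<inter> B = {}"
  shows "q * real (card A) * real (card B) \<le> real (e_between E A B)"
  using assms unfolding cut_dense_def by blast

lemma e_between_commute: "e_between E A B = e_between E B A"
  unfolding e_between_def by (rule arg_cong[where f = card]) (auto simp: insert_commute)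

lemma e_between_le_card_mult:
  assumes "finite A" "finite B"
  shows "e_between E A B \<le> card A * card B"
proof -
  have "{e\<in>E. \<exists>a\<in>A. \<exists>b\<in>B. e = {a, b}} \<subseteq> (\<lambda>(a, b). {a, b}) ` (A \<times> B)"
    by auto
  then have "e_between E A B \<le> card ((\<lambda>(a, b). {a, b}) ` (A \<times> B))"
    unfolding e_between_def using assms by (intro card_mono) auto
  also have "\<dots> \<le> card (A \<times> B)"
    by (rule card_image_le) (use assms in auto)
  finally show ?thesis
    by (simp add: card_cartesian_product)
qed

lemma e_between_Un_le: "e_between E A (B \<union> C) \<le> e_between E A B + e_between E A C"
proof -
  have "{e\<in>E. \<exists>a\<in>A. \<exists>b\<in>B \<union> C. e = {a, b}} =
      {e\<in>E. \<exists>a\<in>A. \<exists>b\<in>B. e = {a, b}} \<union> {e\<in>E. \<exists>a\<in>A. \<exists>b\<in>C. e = {a, b}}"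
    by auto
  then show ?thesis
    unfolding e_between_def by (simp only: card_Un_le)
qed

lemma e_between_del_verts_E:
  assumes "A \<inter> U = {}" "B \<inter> U = {}"
  shows "e_between (del_verts_E E U) A B = e_between E A B"
  unfolding e_between_def del_verts_E_def
  by (rule arg_cong[where f = card]) (use assms in blast)

lemma e_between_Un_del_verts_E_le:
  assumes "finite A" "finite U" "A \<inter> U = {}" "B \<inter> U = {}"
  shows "e_between E A (B \<union> U) \<le> e_between (del_verts_E E U) A B + card A * card U"
proof -
  have "e_between E A (B \<union> U) \<le> e_between E A B + e_between E A U"
    by (rule e_between_Un_le)
  also have "\<dots> \<le> e_between (del_verts_E E U) A B + card A * card U"
    using e_between_le_card_mult[OF assms(1,2), of E] by (simp add: e_between_del_verts_E[OF assms(3,4)])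
  finally show ?thesis .
qed

lemma deletion_loss_le_half_density:
  fixes q a b u :: real
  assumes "0 \<le> q" "0 \<le> a" "a \<le> b" "0 \<le> u" "u \<le> q * (a + b + u) / 8"
  shows "q / 2 * a * b + a * u \<le> q * a * (b + u)"
proof -
  have loss: "u - q * u \<le> q * b / 2"
  proof (cases "q \<le> 1")
    case True
    have "8 * u \<le> q * a + q * b + q * u"
      using assms(5) by (simp add: distrib_left)
    moreover have "q * a \<le> q * b" "0 \<le> q * b"
      using assms(1-3) by (simp_all add: mult_left_mono)
    moreover have "q * u \<le> u" "0 \<le> q * u"
      using mult_right_mono[OF True assms(4)] assms(1,4) by simp_all
    ultimately show ?thesis
      by linarith
  next
    case False
    then have "u \<le> q * u"
      using mult_right_mono[of 1 q u] assms(4) by simp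
    moreover have "0 \<le> q * b"
      using assms(1-3) by simp
    ultimately show ?thesis
      by linarith
  qed
  have "a * (u - q * u) \<le> a * (q * b / 2)"
    using loss assms(2) by (rule mult_left_mono)
  then show ?thesis
    by (simp add: field_simps)
qed

lemma e_between_del_verts_E_ge_half_density:
  assumes "finite V" "cut_dense q V E" "U \<subseteq> V" "real (card U) \<le> q * real (card V) / 8"
    and "A \<union> B = V - U" "A \<inter> B = {}" "card A \<le> card B"
  shows "q / 2 * real (card A) * real (card B) \<le> real (e_between (del_verts_E E U) A B)"
proof (cases "q \<le> 0")
  case True
  then have "q / 2 * real (card A) * real (card B) \<le> 0"
    by (simp add: mult_nonpos_nonneg)
  then show ?thesis
    using of_nat_0_le_iff order_trans by blast
next
  case False
  have "finite (V - U)"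
    using assms(1) by simp
  then have fin: "finite A" "finite B" "finite U"
    using assms(1,3,5) finite_subset by (metis finite_Un)+
  have disj: "A \<inter> U = {}" "B \<inter> U = {}"
    using assms(5) by auto
  have cut: "A \<union> (B \<union> U) = V" "A \<inter> (B \<union> U) = {}"
    using assms(3,5,6) by auto
  have card_BU: "card (B \<union> U) = card B + card U"
    using fin(2,3) disj(2) by (rule card_Un_disjoint)
  have card_V: "card V = card A + card B + card U"
    using card_Un_disjoint[OF fin(1) _ cut(2)] fin cut(1) card_BU by simp
  have card_U: "real (card U) \<le> q * (real (card A) + real (card B) + real (card U)) / 8"
    using assms(4) card_V by simp
  have "real (e_between E A (B \<union> U))
      \<le> real (e_between (del_verts_E E U) A B) + real (card A) * real (card U)"
    using e_between_Un_del_verts_E_le[OF fin(1,3) disj, of E] by (simp flip: of_nat_add of_nat_mult)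
  moreover have "q * real (card A) * (real (card B) + real (card U)) \<le> real (e_between E A (B \<union> U))"
    using cut_denseD[OF assms(2) cut] card_BU by simp
  moreover have "q / 2 * real (card A) * real (card B) + real (card A) * real (card U)
      \<le> q * real (card A) * (real (card B) + real (card U))"
    using deletion_loss_le_half_density[OF _ of_nat_0_le_iff _ of_nat_0_le_iff card_U] False assms(7)
    by simp
  ultimately show ?thesis
    by linarith
qed

theorem lemma3p7:
  fixes V U :: "'a set" and E :: "'a set set" and q :: real and n :: nat
  assumes "simple_graph V E"
    and "n = card V"
    and "cut_dense q V E"
    and "U \<subseteq> V"
    and "real (card U) \<le> q * real n / 8"
  shows "cut_dense (q / 2) (del_verts_V V U) (del_verts_E E U)"
  unfolding cut_dense_def del_verts_V_def
proof (intro allI impI)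
  fix A B
  assume part: "A \<union> B = V - U \<and> A \<inter> B = {}"
  have "finite V"
    using assms(1) by (simp add: simple_graph_def)
  note smaller_side = e_between_del_verts_E_ge_half_density[OF this assms(3,4) assms(5)[unfolded assms(2)]]
  show "q / 2 * real (card A) * real (card B) \<le> real (e_between (del_verts_E E U) A B)"
  proof (cases "card A \<le> card B")
    case True
    with part show ?thesis
      by (intro smaller_side) auto
  next
    case False
    with part have "q / 2 * real (card B) * real (card A) \<le> real (e_between (del_verts_E E U) B A)"
      by (intro smaller_side) auto
    then show ?thesis
      by (simp add: e_between_commute[of _ B A] mult.commute mult.left_commute)
  qed
qed

end
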